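(* Let $r,s,t,\ell,m$ be integers with $1 \le t \le \ell \le m$, $1 \le r \le \ell$ and $1 \le s \le t$. Then $$\mathfrak{w}_r^{(s)}(t;\ell,m) = \frac{q-1}{q}\,q^{\binom{s}{2}}\left(\frac{[m]_q!}{[m-t]_q!} - (-1)^s \frac{[m-s]_q!}{[m-t]_q!} \right)q^{s(\ell-r)}\,q^{\binom{t-s}{2}}\,{r\brack s}_q {\ell-r\brack t-s}_q.$$
   Context: $q$ is a prime power. For an $\ell\times m$ matrix $M=(m_{ij})$ over $\mathbb{F}_q$ and $1\le r\le\ell$, $\tau_r(M)=m_{11}+\cdots+m_{rr}$ and $\underline{M}_r$ is the $r\times m$ matrix of the first $r$ rows of $M$. $\mathfrak w^{(s)}_r(t;\ell,m)$ is the number of $\ell\times m$ matrices $M$ over $\mathbb{F}_q$ with $\mathrm{rk}(M)=t$, $\mathrm{rk}(\underline{M}_r)=s$ and $\tau_r(M)\ne 0$. The Gaussian factorial is $[n]_q!=\prod_{i=1}^n(q^i-1)$ (with $[0]_q!=1$), and ${n\brack k}_q$ is the Gaussian binomial coefficient, equal to $0$ if $k<0$ or $k>n$. *)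

theory Defs
  imports "Jordan_Normal_Form.DL_Rank"
begin

definition gfact :: "real \<Rightarrow> nat \<Rightarrow> real" where
  "gfact q n = (\<Prod>i\<in>{1..n}. q ^ i - 1)"

definition gbinom :: "real \<Rightarrow> nat \<Rightarrow> nat \<Rightarrow> real" where
  "gbinom q n k = (if k \<le> n then gfact q n / (gfact q k * gfact q (n - k)) else 0)"

text \<open>tau_r(M) = m_11 + ... + m_rr (0-based indices here).\<close>
definition tau :: "nat \<Rightarrow> 'a::field mat \<Rightarrow> 'a" where
  "tau r M = (\<Sum>i<r. M $$ (i, i))"

definition first_rows :: "nat \<Rightarrow> 'a mat \<Rightarrow> 'a mat" where
  "first_rows r M = mat r (dim_col M) (\<lambda>(i, j). M $$ (i, j))"

definition mrank :: "'a::field mat \<Rightarrow> nat" where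
  "mrank M = vec_space.rank (dim_row M) M"

definition wcount :: "'a::{finite,field} itself \<Rightarrow> nat \<Rightarrow> nat \<Rightarrow> nat \<Rightarrow> nat \<Rightarrow> nat \<Rightarrow> nat" where
  "wcount _ r s t l m = card {M \<in> carrier_mat l m :: 'a mat set.
      mrank M = t \<and> mrank (first_rows r M) = s \<and> tau r M \<noteq> 0}"

end

theory Submission
  imports Defs "HOL-Library.Cardinality"
begin

text \<open>
  Matrices are built row by row. Appending a row \<open>v\<close> to \<open>A\<close> raises the rank iff \<open>v\<close> lies
  outside the row space of \<open>A\<close>, which has \<open>q ^ rank A\<close> elements (row rank equals column
  rank). Hence the number \<open>N(a, b, k)\<close> of \<open>a \<times> b\<close> matrices of rank \<open>k\<close> satisfies a
  \<open>q\<close>-Pascal recursion, with solution \<open>q ^ (k choose 2) [a, k] [b]! / [b - k]!\<close>.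

  For the trace, append row \<open>r\<close> to an \<open>r \<times> m\<close> matrix \<open>A\<close>: the new trace is
  \<open>\<tau>\<^sub>r(A) + v\<^sub>r\<close>, so one counts vectors inside (or outside) the row space of \<open>A\<close>
  whose \<open>r\<close>-th coordinate avoids one value. Unless column \<open>r\<close> of \<open>A\<close> vanishes, these
  are a fraction \<open>(q - 1) / q\<close> of all; if it vanishes, \<open>A\<close> is an \<open>r \<times> (m - 1)\<close> matrix
  with a zero column inserted. The resulting recursion for the number \<open>F(r, m, s)\<close> of
  \<open>r \<times> m\<close> matrices of rank \<open>s\<close> with nonzero trace is solved by
  \<open>F = (q - 1) / q * (N(r, m, s) - (-1) ^ s q ^ (s choose 2) [r, s])\<close>.

  The rows below row \<open>r\<close> do not affect the conditions on the first \<open>r\<close> rows, and each of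
  them obeys the recursion of \<open>N\<close> for \<open>m - s\<close> columns and rank \<open>t - s\<close>, up to a factor
  \<open>q ^ s\<close>; so \<open>wcount\<close> equals \<open>F(r, m, s) q ^ (s (l - r)) N(l - r, m - s, t - s)\<close>.
\<close>

section \<open>Finite vector spaces\<close>

lemma finite_carrier_vec [simp]: "finite (carrier_vec n :: 'a::finite vec set)"
proof -
  have "carrier_vec n \<subseteq> (\<lambda>f. vec n f) ` PiE {..<n} (\<lambda>_. UNIV :: 'a set)"
  proof
    fix v :: "'a vec" assume v: "v \<in> carrier_vec n"
    have "v = vec n (restrict (($) v) {..<n})" using v by (auto intro!: eq_vecI)
    moreover have "restrict (($) v) {..<n} \<in> PiE {..<n} (\<lambda>_. UNIV)" by auto
    ultimately show "v \<in> (\<lambda>f. vec n f) ` PiE {..<n} (\<lambda>_. UNIV)" by blast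
  qed
  then show ?thesis by (rule finite_subset) (intro finite_imageI finite_PiE; simp)
qed

lemma card_carrier_vec: "card (carrier_vec n :: 'a::finite vec set) = CARD('a) ^ n"
proof -
  have "bij_betw (\<lambda>f. vec n f) (PiE {..<n} (\<lambda>_. UNIV)) (carrier_vec n :: 'a vec set)"
  proof (rule bij_betwI[where g = "\<lambda>v. restrict (($) v) {..<n}"])
    show "restrict (($) (vec n f)) {..<n} = f" if "f \<in> PiE {..<n} (\<lambda>_. UNIV :: 'a set)" for f
      using that by (auto simp: PiE_def extensional_def fun_eq_iff)
    show "vec n (restrict (($) v) {..<n}) = v" if "v \<in> carrier_vec n" for v :: "'a vec"
      using that by (auto intro!: eq_vecI)
  qed auto
  then show ?thesis by (simp add: bij_betw_same_card[symmetric] card_PiE)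
qed

lemma finite_carrier_mat [simp]: "finite (carrier_mat n m :: 'a::finite mat set)"
proof -
  have "carrier_mat n m \<subseteq> (\<lambda>f. mat n m f) ` PiE ({..<n} \<times> {..<m}) (\<lambda>_. UNIV :: 'a set)"
  proof
    fix A :: "'a mat" assume A: "A \<in> carrier_mat n m"
    have "A = mat n m (restrict (\<lambda>ij. A $$ ij) ({..<n} \<times> {..<m}))"
      using A by (auto intro!: eq_matI)
    moreover have "restrict (\<lambda>ij. A $$ ij) ({..<n} \<times> {..<m}) \<in> PiE ({..<n} \<times> {..<m}) (\<lambda>_. UNIV)"
      by auto
    ultimately show "A \<in> (\<lambda>f. mat n m f) ` PiE ({..<n} \<times> {..<m}) (\<lambda>_. UNIV)" by blast
  qed
  then show ?thesis by (rule finite_subset) (intro finite_imageI finite_PiE; simp)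
qed

lemma one_less_CARD_field: "1 < CARD('a::{finite,field})"
proof -
  have "card {0 :: 'a, 1} \<le> CARD('a)" by (rule card_mono) auto
  then show ?thesis by simp
qed

lemma real_card_Diff_subset:
  assumes "finite B" "A \<subseteq> B"
  shows "real (card (B - A)) = real (card B) - real (card A)"
proof -
  have "card A \<le> card B" using assms by (rule card_mono)
  then show ?thesis using assms finite_subset[OF assms(2,1)] by (simp add: card_Diff_subset of_nat_diff)
qed

locale finite_vec_space = vec_space f_ty n for f_ty :: "'a::{finite,field} itself" and n
begin

lemma span_list_carrier: "set ws \<subseteq> carrier_vec n \<Longrightarrow> span_list ws \<subseteq> carrier_vec n"
  using span_list_as_span span_closed by blast

lemma span_list_Cons:
  assumes "v \<in> carrier_vec n"
  shows "span_list (v # ws) = {a \<cdot>\<^sub>v v + w | a w. w \<in> span_list ws}"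
proof (rule equalityI; rule subsetI)
  fix x assume "x \<in> span_list (v # ws)"
  then obtain c where "x = c 0 \<cdot>\<^sub>v v + lincomb_list (c \<circ> Suc) ws"
    by (auto simp: span_list_def)
  moreover have "lincomb_list (c \<circ> Suc) ws \<in> span_list ws" by (auto simp: span_list_def)
  ultimately show "x \<in> {a \<cdot>\<^sub>v v + w | a w. w \<in> span_list ws}" by blast
next
  fix x assume "x \<in> {a \<cdot>\<^sub>v v + w | a w. w \<in> span_list ws}"
  then obtain a c where x: "x = a \<cdot>\<^sub>v v + lincomb_list c ws"
    by (auto simp: span_list_def)
  let ?c = "\<lambda>i. if i = 0 then a else c (i - 1)"
  have "?c \<circ> Suc = c" by auto
  then have "lincomb_list ?c (v # ws) = x" using x by simp
  then show "x \<in> span_list (v # ws)" unfolding span_list_def by blast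
qed

lemma smult_add_mem_span_list:
  assumes ws: "set ws \<subseteq> carrier_vec n" and "w \<in> span_list ws" "w' \<in> span_list ws"
  shows "a \<cdot>\<^sub>v w + w' \<in> span_list ws"
proof -
  have "a \<cdot>\<^sub>v w \<in> span (set ws)" "w' \<in> span (set ws)"
    using assms smult_in_span[OF ws] span_list_as_span[OF ws] by auto
  then have "a \<cdot>\<^sub>v w + w' \<in> span (set ws)" using span_add1[OF ws] by simp
  then show ?thesis using span_list_as_span[OF ws] by simp
qed

lemma zero_mem_span_list:
  assumes ws: "set ws \<subseteq> carrier_vec n"
  shows "0\<^sub>v n \<in> span_list ws"
proof -
  have "0\<^sub>v n = lincomb (\<lambda>_. 0) {}" by simp
  then have "0\<^sub>v n \<in> span (set ws)" by (rule in_spanI) auto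
  then show ?thesis using span_list_as_span[OF ws] by simp
qed

lemma span_list_Cons_mem:
  assumes ws: "set ws \<subseteq> carrier_vec n" and v: "v \<in> span_list ws"
  shows "span_list (v # ws) = span_list ws"
proof -
  have vc: "v \<in> carrier_vec n" using v span_list_carrier[OF ws] by auto
  show ?thesis
  proof (rule equalityI; rule subsetI)
    fix x assume "x \<in> span_list (v # ws)"
    then obtain a w where "x = a \<cdot>\<^sub>v v + w" "w \<in> span_list ws"
      using span_list_Cons[OF vc] by auto
    then show "x \<in> span_list ws" using smult_add_mem_span_list[OF ws v] by auto
  next
    fix x assume x: "x \<in> span_list ws"
    then have "x = 0 \<cdot>\<^sub>v v + x" using vc span_list_carrier[OF ws] by auto
    then show "x \<in> span_list (v # ws)" using span_list_Cons[OF vc] x by blast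
  qed
qed

lemma card_span_list_Cons_nonmem:
  assumes ws: "set ws \<subseteq> carrier_vec n" and vc: "v \<in> carrier_vec n" and v: "v \<notin> span_list ws"
  shows "card (span_list (v # ws)) = CARD('a) * card (span_list ws)"
proof -
  have eq: "span_list (v # ws) = (\<lambda>(a, w). a \<cdot>\<^sub>v v + w) ` (UNIV \<times> span_list ws)"
    using span_list_Cons[OF vc] by auto
  have inj: "inj_on (\<lambda>(a, w). a \<cdot>\<^sub>v v + w) (UNIV \<times> span_list ws)"
  proof (rule inj_onI, clarsimp)
    fix a w a' w' assume w: "w \<in> span_list ws" and w': "w' \<in> span_list ws"
      and e: "a \<cdot>\<^sub>v v + w = a' \<cdot>\<^sub>v v + w'"
    have wc: "w \<in> carrier_vec n" "w' \<in> carrier_vec n" using w w' span_list_carrier[OF ws] by auto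
    have coord: "(a - a') * v $ i = w' $ i - w $ i" if "i < n" for i
    proof -
      have "(a \<cdot>\<^sub>v v + w) $ i = (a' \<cdot>\<^sub>v v + w') $ i" using e by simp
      then show ?thesis using that vc wc by (simp add: algebra_simps)
    qed
    show "a = a' \<and> w = w'"
    proof (cases "a = a'")
      case True
      then have "w = w'" using coord wc by (intro eq_vecI) auto
      then show ?thesis using True by simp
    next
      case False
      have "inverse (a - a') \<cdot>\<^sub>v ((-1) \<cdot>\<^sub>v w + w') + 0\<^sub>v n \<in> span_list ws"
        by (intro smult_add_mem_span_list ws zero_mem_span_list w w')
      moreover have "inverse (a - a') \<cdot>\<^sub>v ((-1) \<cdot>\<^sub>v w + w') + 0\<^sub>v n = v"
        using coord False wc vc by (intro eq_vecI) (auto simp: field_simps)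
      ultimately show ?thesis using v by simp
    qed
  qed
  then show ?thesis
    unfolding eq card_image[OF inj] by (simp add: card_cartesian_product)
qed

lemma card_span_list_lin_indpt:
  assumes "distinct ws" "set ws \<subseteq> carrier_vec n" "lin_indpt (set ws)"
  shows "card (span_list ws) = CARD('a) ^ length ws"
  using assms
proof (induction ws)
  case Nil
  then show ?case using span_list_as_span[of "[]"] span_empty by simp
next
  case (Cons u ws)
  have ws: "set ws \<subseteq> carrier_vec n" and u: "u \<in> carrier_vec n" using Cons.prems by auto
  have "u \<notin> span (set ws)"
  proof
    assume "u \<in> span (set ws)"
    moreover have "set (u # ws) - {u} = set ws" using Cons.prems(1) by auto
    ultimately have "lin_dep (set (u # ws))" using lindep_span[of "set (u # ws)"] Cons.prems(2) by auto
    then show False using Cons.prems(3) by simp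
  qed
  then have "u \<notin> span_list ws" using span_list_as_span[OF ws] by simp
  moreover have "card (span_list ws) = CARD('a) ^ length ws"
    using Cons.IH Cons.prems subset_li_is_li[OF Cons.prems(3)] by auto
  ultimately show ?case using card_span_list_Cons_nonmem[OF ws u] by simp
qed

lemma exists_basis_list:
  assumes S: "S \<subseteq> carrier_vec n" "finite S"
  obtains us where "set us \<subseteq> carrier_vec n" "distinct us" "lin_indpt (set us)"
    "span (set us) = span S" "length us = vectorspace.dim class_ring (span_vs S)"
proof -
  have "lin_indpt {}" unfolding lin_dep_def by auto
  then obtain U where U: "finite U" "maximal U (\<lambda>T. T \<subseteq> S \<and> lin_indpt T)"
    using maximal_exists_superset[OF S(2), of "\<lambda>T. T \<subseteq> S \<and> lin_indpt T" "{}"] by blast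
  have US: "U \<subseteq> S" and li: "lin_indpt U" using U(2) by (auto simp: maximal_def)
  have "span U = span S"
  proof (rule ccontr)
    assume ne: "span U \<noteq> span S"
    have "span U \<subseteq> span S" using span_is_monotone US by metis
    then have "\<not> S \<subseteq> span U"
      by (meson US ne S(1) span_is_submodule span_is_subset subset_antisym subset_trans)
    then obtain s where s: "s \<in> S" "s \<notin> span U" by blast
    then have "lin_indpt (U \<union> {s})"
      by (meson US li S(1) lin_dep_iff_in_span rev_subsetD span_mem subset_trans)
    moreover have "s \<notin> U" using US s S(1) span_mem by auto
    ultimately have "\<not> maximal U (\<lambda>T. T \<subseteq> S \<and> lin_indpt T)"
      unfolding maximal_def using US s(1) by auto
    then show False using U(2) by blast
  qed
  obtain us where us: "set us = U" "distinct us" using finite_distinct_list[OF U(1)] by blast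
  show ?thesis
  proof (rule that[of us])
    show "length us = vectorspace.dim class_ring (span_vs S)"
      using distinct_card[OF us(2)] us(1) dim_span[OF S U(2)] by simp
  qed (use us US S(1) li \<open>span U = span S\<close> in auto)
qed

lemma card_span:
  assumes "S \<subseteq> carrier_vec n" "finite S"
  shows "card (span S) = CARD('a) ^ vectorspace.dim class_ring (span_vs S)"
proof -
  obtain us where us: "set us \<subseteq> carrier_vec n" "distinct us" "lin_indpt (set us)"
    "span (set us) = span S" "length us = vectorspace.dim class_ring (span_vs S)"
    using exists_basis_list[OF assms] .
  then have "card (span_list us) = CARD('a) ^ length us" by (intro card_span_list_lin_indpt)
  then show ?thesis using us span_list_as_span[OF us(1)] by simp
qed

end

section \<open>Row spaces and rank\<close>

lemma CARD_power_inject: "CARD('a::{finite,field}) ^ i = CARD('a) ^ j \<longleftrightarrow> i = j"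
  using one_less_CARD_field[where 'a='a] by (rule power_inject_exp)

lemma card_col_space:
  fixes M :: "'a::{finite,field} mat"
  assumes M: "M \<in> carrier_mat n m"
  shows "card (vec_space.col_space n M) = CARD('a) ^ mrank M"
proof -
  interpret finite_vec_space "TYPE('a)" n .
  have "set (cols M) \<subseteq> carrier_vec n" using M cols_dim[of M] by simp
  then have "card (span (set (cols M))) = CARD('a) ^ rank M"
    unfolding rank_def by (rule card_span) simp
  moreover have "mrank M = rank M" using M by (simp add: mrank_def)
  ultimately show ?thesis by (simp add: col_space_def)
qed

lemma mult_factor_of_cols_in_col_space:
  fixes B :: "'a::field mat"
  assumes B: "B \<in> carrier_mat n k" and M: "M \<in> carrier_mat n m"
    and cols: "\<And>j. j < m \<Longrightarrow> col M j \<in> vec_space.col_space n B"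
  obtains C where "C \<in> carrier_mat k m" "M = B * C"
proof -
  interpret vec_space "TYPE('a)" n .
  have "\<forall>j<m. \<exists>x. x \<in> carrier_vec k \<and> B *\<^sub>v x = col M j"
    using cols unfolding col_space_eq[OF B] using B by auto
  then obtain X where X: "\<And>j. j < m \<Longrightarrow> X j \<in> carrier_vec k \<and> B *\<^sub>v X j = col M j"
    by metis
  define C where "C = mat_of_cols k (map X [0..<m])"
  have C: "C \<in> carrier_mat k m"
    unfolding C_def using mat_of_cols_carrier(1)[of k "map X [0..<m]"] by simp
  have "M = B * C"
  proof (rule eq_matI)
    fix i j assume "i < dim_row (B * C)" "j < dim_col (B * C)"
    then have i: "i < n" and j: "j < m" using B C by auto
    have "col C j = X j" unfolding C_def using j X[OF j] by (intro eq_vecI) auto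
    then have "(B * C) $$ (i, j) = (B *\<^sub>v X j) $ i" using i j B C by simp
    also have "\<dots> = M $$ (i, j)" using X[OF j] i j M by simp
    finally show "M $$ (i, j) = (B * C) $$ (i, j)" by simp
  qed (use B C M in auto)
  with C show ?thesis by (rule that)
qed

lemma rank_factorization:
  fixes M :: "'a::{finite,field} mat"
  assumes M: "M \<in> carrier_mat n m"
  obtains B C where "B \<in> carrier_mat n (mrank M)" "C \<in> carrier_mat (mrank M) m" "M = B * C"
proof -
  interpret finite_vec_space "TYPE('a)" n .
  have Sc: "set (cols M) \<subseteq> carrier_vec n" using M cols_dim[of M] by auto
  obtain us where us: "set us \<subseteq> carrier_vec n" "distinct us" "lin_indpt (set us)"
    "span (set us) = span (set (cols M))"
    "length us = vectorspace.dim class_ring (span_vs (set (cols M)))"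
    using exists_basis_list[OF Sc List.finite_set] .
  have "vectorspace.dim class_ring (span_vs (set (cols M))) = mrank M"
    using M by (simp add: mrank_def rank_def)
  with us(5) have "length us = mrank M" by simp
  define B where "B = mat_of_cols n us"
  have B: "B \<in> carrier_mat n (mrank M)"
    unfolding B_def using mat_of_cols_carrier(1)[of n us] \<open>length us = mrank M\<close> by simp
  have cs: "col_space B = span (set (cols M))" unfolding col_space_def B_def using us by simp
  have cols: "col M j \<in> col_space B" if "j < m" for j
  proof -
    have "col M j \<in> set (cols M)" using that M by (auto simp: cols_def)
    then show ?thesis unfolding cs by (rule span_mem[OF Sc])
  qed
  obtain C where "C \<in> carrier_mat (mrank M) m" "M = B * C"
    by (rule mult_factor_of_cols_in_col_space[OF B M cols])
  with B show ?thesis by (rule that)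
qed

lemma card_col_space_mult_le:
  fixes B :: "'a::{finite,field} mat"
  assumes B: "B \<in> carrier_mat n k" and C: "C \<in> carrier_mat k m"
  shows "card (vec_space.col_space n (B * C)) \<le> CARD('a) ^ k"
proof -
  interpret finite_vec_space "TYPE('a)" n .
  have BC: "B * C \<in> carrier_mat n m" using B C by simp
  have "col_space (B * C) \<subseteq> (\<lambda>x. B *\<^sub>v x) ` carrier_vec k"
  proof
    fix y assume "y \<in> col_space (B * C)"
    then obtain x where x: "x \<in> carrier_vec m" "y = (B * C) *\<^sub>v x"
      unfolding col_space_eq[OF BC] using BC by auto
    then have "y = B *\<^sub>v (C *\<^sub>v x)" using B C by auto
    moreover have "C *\<^sub>v x \<in> carrier_vec k" using C x(1) by simp
    ultimately show "y \<in> (\<lambda>x. B *\<^sub>v x) ` carrier_vec k" by blast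
  qed
  then have "card (col_space (B * C)) \<le> card ((\<lambda>x. B *\<^sub>v x) ` carrier_vec k)"
    by (intro card_mono finite_imageI finite_carrier_vec)
  also have "\<dots> \<le> card (carrier_vec k :: 'a vec set)" by (rule card_image_le) simp
  finally show ?thesis by (simp add: card_carrier_vec)
qed

lemma card_row_space_le_card_col_space:
  fixes M :: "'a::{finite,field} mat"
  assumes M: "M \<in> carrier_mat n m"
  shows "card (vec_space.row_space m M) \<le> card (vec_space.col_space n M)"
proof -
  obtain B C where B: "B \<in> carrier_mat n (mrank M)" and C: "C \<in> carrier_mat (mrank M) m"
    and BC: "M = B * C"
    using rank_factorization[OF M] .
  have "vec_space.row_space m M = vec_space.col_space m (C\<^sup>T * B\<^sup>T)"
    unfolding vec_space.row_space_eq_col_space_transpose BC transpose_mult[OF B C] ..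
  also have "card \<dots> \<le> CARD('a) ^ mrank M"
    by (rule card_col_space_mult_le) (use B C in auto)
  also have "\<dots> = card (vec_space.col_space n M)" by (rule card_col_space[OF M, symmetric])
  finally show ?thesis .
qed

text \<open>Row rank equals column rank (\<open>mrank\<close> is the column rank).\<close>

lemma card_row_space:
  fixes M :: "'a::{finite,field} mat"
  assumes M: "M \<in> carrier_mat n m"
  shows "card (vec_space.row_space m M) = CARD('a) ^ mrank M"
proof -
  have "card (vec_space.col_space n M) = card (vec_space.row_space n M\<^sup>T)"
    unfolding vec_space.row_space_eq_col_space_transpose transpose_transpose ..
  also have "\<dots> \<le> card (vec_space.col_space m M\<^sup>T)"
    by (rule card_row_space_le_card_col_space) (use M in auto)
  also have "\<dots> = card (vec_space.row_space m M)"
    unfolding vec_space.row_space_eq_col_space_transpose ..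
  finally have "card (vec_space.col_space n M) \<le> card (vec_space.row_space m M)" .
  with card_row_space_le_card_col_space[OF M]
  have "card (vec_space.row_space m M) = card (vec_space.col_space n M)"
    by (rule le_antisym)
  then show ?thesis using card_col_space[OF M] by simp
qed

lemma row_space_carrier:
  assumes "A \<in> carrier_mat k m"
  shows "vec_space.row_space m A \<subseteq> carrier_vec m"
proof -
  interpret vec_space "TYPE('a::field)" m .
  have "set (rows A) \<subseteq> carrier_vec m" using assms by (auto simp: rows_def)
  then show ?thesis unfolding row_space_def using span_closed[of "set (rows A)"] by auto
qed

lemma row_mem_row_space:
  assumes "A \<in> carrier_mat k m" "i < k"
  shows "row A i \<in> vec_space.row_space m A"
proof -
  interpret vec_space "TYPE('a::field)" m .
  show ?thesis unfolding row_space_def using assms by (intro span_mem) (auto simp: rows_def)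
qed

lemma mrank_eq_0_imp_zero:
  fixes M :: "'a::{finite,field} mat"
  assumes M: "M \<in> carrier_mat n m" and "mrank M = 0"
  shows "M = 0\<^sub>m n m"
proof -
  interpret finite_vec_space "TYPE('a)" m .
  have R: "set (rows M) \<subseteq> carrier_vec m" using M by (auto simp: rows_def)
  have "card (row_space M) = 1" using card_row_space[OF M] assms(2) by simp
  then obtain x where x: "row_space M = {x}" by (rule card_1_singletonE)
  have "0\<^sub>v m \<in> row_space M"
    using zero_mem_span_list[OF R] span_list_as_span[OF R] by (simp add: row_space_def)
  with x have "row_space M = {0\<^sub>v m}" by simp
  then have zero: "row M i = 0\<^sub>v m" if "i < n" for i using row_mem_row_space[OF M that] by simp
  show ?thesis
  proof (rule eq_matI)
    fix i j assume "i < dim_row (0\<^sub>m n m)" "j < dim_col (0\<^sub>m n m)"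
    then have "M $$ (i, j) = row M i $ j" and "i < n" "j < m" using M by auto
    then show "M $$ (i, j) = 0\<^sub>m n m $$ (i, j)" using zero by simp
  qed (use M in auto)
qed

lemma mrank_zero_mat [simp]: "mrank (0\<^sub>m n m :: 'a::field mat) = 0"
  by (simp add: mrank_def vec_space.rank_0I)

section \<open>Appending a row\<close>

definition append_row :: "'a mat \<Rightarrow> 'a vec \<Rightarrow> 'a mat" where
  "append_row A v = mat_of_rows (dim_col A) (rows A @ [v])"

lemma dim_append_row [simp]:
  "dim_row (append_row A v) = Suc (dim_row A)" "dim_col (append_row A v) = dim_col A"
  by (simp_all add: append_row_def)

lemma append_row_carrier [simp]: "A \<in> carrier_mat k m \<Longrightarrow> append_row A v \<in> carrier_mat (Suc k) m"
  by (intro carrier_matI) auto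

lemma dim_first_rows [simp]: "dim_row (first_rows k M) = k" "dim_col (first_rows k M) = dim_col M"
  by (simp_all add: first_rows_def)

lemma append_row_index:
  assumes "A \<in> carrier_mat k m" "i \<le> k" "j < m"
  shows "append_row A v $$ (i, j) = (if i < k then A $$ (i, j) else v $ j)"
  using assms by (auto simp: append_row_def mat_of_rows_index nth_append)

lemma rows_append_row:
  assumes "A \<in> carrier_mat k m" "v \<in> carrier_vec m"
  shows "rows (append_row A v) = rows A @ [v]"
  unfolding append_row_def using assms by (intro rows_mat_of_rows) (auto simp: rows_def)

lemma first_rows_carrier: "M \<in> carrier_mat n m \<Longrightarrow> first_rows k M \<in> carrier_mat k m"
  by (simp add: first_rows_def)

lemma first_rows_index: "i < k \<Longrightarrow> j < dim_col M \<Longrightarrow> first_rows k M $$ (i, j) = M $$ (i, j)"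
  by (simp add: first_rows_def)

lemma first_rows_append_row:
  assumes "A \<in> carrier_mat k m"
  shows "first_rows k (append_row A v) = A"
  using assms by (intro eq_matI) (auto simp: first_rows_index append_row_index)

lemma append_row_first_rows:
  assumes "M \<in> carrier_mat (Suc k) m"
  shows "append_row (first_rows k M) (row M k) = M"
proof -
  have F: "first_rows k M \<in> carrier_mat k m" using assms by (rule first_rows_carrier)
  show ?thesis
  proof (rule eq_matI)
    fix i j assume "i < dim_row M" "j < dim_col M"
    then have "i \<le> k" "j < m" using assms by auto
    then show "append_row (first_rows k M) (row M k) $$ (i, j) = M $$ (i, j)"
      using assms by (auto simp: append_row_index[OF F] first_rows_index)
  qed (use assms F in auto)
qed

lemma first_rows_first_rows: "r \<le> l \<Longrightarrow> first_rows r (first_rows l M) = first_rows r M"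
  by (intro eq_matI) (auto simp: first_rows_def)

lemma tau_first_rows: "r \<le> l \<Longrightarrow> r \<le> dim_col M \<Longrightarrow> tau r (first_rows l M) = tau r M"
  unfolding tau_def by (intro sum.cong) (auto simp: first_rows_def)

lemma tau_Suc_append_row:
  assumes A: "A \<in> carrier_mat r m" and "r < m"
  shows "tau (Suc r) (append_row A v) = tau r A + v $ r"
proof -
  have "tau r (append_row A v) = tau r (first_rows r (append_row A v))"
    using tau_first_rows[of r r "append_row A v"] assms by simp
  then show ?thesis using assms by (simp add: tau_def first_rows_append_row append_row_index)
qed

lemma card_append_row_sum:
  fixes P :: "'a::finite mat \<Rightarrow> bool"
  shows "card {M \<in> carrier_mat (Suc k) m. P M} =
    (\<Sum>A\<in>carrier_mat k m. card {v \<in> carrier_vec m. P (append_row A v)})"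
proof -
  let ?S = "Sigma (carrier_mat k m) (\<lambda>A. {v \<in> carrier_vec m. P (append_row A v)})"
  have "{M \<in> carrier_mat (Suc k) m. P M} = (\<lambda>(A, v). append_row A v) ` ?S"
  proof (rule equalityI; rule subsetI)
    fix M assume "M \<in> {M \<in> carrier_mat (Suc k) m. P M}"
    then have M: "M \<in> carrier_mat (Suc k) m" "P M" by auto
    then have "(first_rows k M, row M k) \<in> ?S"
      by (auto simp: first_rows_carrier append_row_first_rows)
    moreover have "M = (\<lambda>(A, v). append_row A v) (first_rows k M, row M k)"
      using append_row_first_rows[OF M(1)] by simp
    ultimately show "M \<in> (\<lambda>(A, v). append_row A v) ` ?S" by (rule rev_image_eqI)
  qed auto
  moreover have "inj_on (\<lambda>(A, v). append_row A v) ?S"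
  proof (rule inj_onI, clarsimp)
    fix A v A' v' assume A: "A \<in> carrier_mat k m" "v \<in> carrier_vec m"
      and A': "A' \<in> carrier_mat k m" "v' \<in> carrier_vec m"
      and eq: "append_row A v = append_row A' v'"
    have "A = A'" using first_rows_append_row[OF A(1), of v] first_rows_append_row[OF A'(1), of v'] eq by simp
    moreover have "rows A @ [v] = rows A' @ [v']"
      using eq rows_append_row[OF A] rows_append_row[OF A'] by simp
    ultimately show "A = A' \<and> v = v'" by simp
  qed
  ultimately have "card {M \<in> carrier_mat (Suc k) m. P M} = card ?S"
    by (simp add: card_image)
  also have "\<dots> = (\<Sum>A\<in>carrier_mat k m. card {v \<in> carrier_vec m. P (append_row A v)})"
    by (rule card_SigmaI) (auto intro: finite_subset[OF _ finite_carrier_vec])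
  finally show ?thesis .
qed

lemma mrank_append_row:
  fixes A :: "'a::{finite,field} mat"
  assumes A: "A \<in> carrier_mat k m" and v: "v \<in> carrier_vec m"
  shows "mrank (append_row A v) =
    (if v \<in> vec_space.row_space m A then mrank A else Suc (mrank A))"
proof -
  interpret finite_vec_space "TYPE('a)" m .
  have R: "set (rows A) \<subseteq> carrier_vec m" using A by (auto simp: rows_def)
  have "row_space (append_row A v) = span_list (v # rows A)"
    using R v by (simp add: row_space_def rows_append_row[OF A v] span_list_as_span)
  then have app: "card (span_list (v # rows A)) = CARD('a) ^ mrank (append_row A v)"
    using card_row_space[of "append_row A v" "Suc k" m] A by simp
  have "row_space A = span_list (rows A)"
    using R by (simp add: row_space_def span_list_as_span)
  moreover have "card (span_list (rows A)) = CARD('a) ^ mrank A"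
    using card_row_space[OF A] calculation by simp
  ultimately have "CARD('a) ^ mrank (append_row A v) =
      CARD('a) ^ (if v \<in> row_space A then mrank A else Suc (mrank A))"
    using app span_list_Cons_mem[OF R] card_span_list_Cons_nonmem[OF R v] by auto
  then show ?thesis by (simp only: CARD_power_inject)
qed

section \<open>Counting vectors by one coordinate\<close>

lemma card_coord_fibre_le:
  fixes U :: "'a::{finite,field} vec set"
  assumes U: "U \<subseteq> carrier_vec m" and j: "j < m" and e: "e \<in> carrier_vec m" "e $ j \<noteq> 0"
    and closed: "\<And>u a. u \<in> U \<Longrightarrow> u + a \<cdot>\<^sub>v e \<in> U"
  shows "card {u \<in> U. u $ j = c\<^sub>1} \<le> card {u \<in> U. u $ j = c\<^sub>2}"
proof -
  let ?f = "\<lambda>u. u + ((c\<^sub>2 - c\<^sub>1) / e $ j) \<cdot>\<^sub>v e"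
  have "inj_on ?f {u \<in> U. u $ j = c\<^sub>1}"
  proof (rule inj_onI)
    fix x y assume "x \<in> {u \<in> U. u $ j = c\<^sub>1}" "y \<in> {u \<in> U. u $ j = c\<^sub>1}" and xy: "?f x = ?f y"
    then have xy_carrier: "x \<in> carrier_vec m" "y \<in> carrier_vec m" using U by auto
    show "x = y"
    proof (rule eq_vecI)
      fix i assume "i < dim_vec y"
      moreover have "?f x $ i = ?f y $ i" using xy by simp
      ultimately show "x $ i = y $ i" using xy_carrier e by simp
    qed (use xy_carrier in auto)
  qed
  moreover have "?f ` {u \<in> U. u $ j = c\<^sub>1} \<subseteq> {u \<in> U. u $ j = c\<^sub>2}"
  proof
    fix z assume "z \<in> ?f ` {u \<in> U. u $ j = c\<^sub>1}"
    then obtain x where x: "x \<in> U" "x $ j = c\<^sub>1" "z = ?f x" by blast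
    then have "x \<in> carrier_vec m" using U by auto
    then have "z $ j = c\<^sub>2" using x j e by (simp add: field_simps)
    moreover have "z \<in> U" using x closed by simp
    ultimately show "z \<in> {u \<in> U. u $ j = c\<^sub>2}" by simp
  qed
  moreover have "finite {u \<in> U. u $ j = c\<^sub>2}"
    using finite_subset[OF U finite_carrier_vec] by simp
  ultimately show ?thesis by (rule card_inj_on_le)
qed

lemma card_coord_fibre:
  fixes U :: "'a::{finite,field} vec set"
  assumes U: "U \<subseteq> carrier_vec m" and j: "j < m" and e: "e \<in> carrier_vec m" "e $ j \<noteq> 0"
    and closed: "\<And>u a. u \<in> U \<Longrightarrow> u + a \<cdot>\<^sub>v e \<in> U"
  shows "CARD('a) * card {u \<in> U. u $ j = c} = card U"
proof -
  have finU: "finite U" using U finite_carrier_vec by (rule finite_subset)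
  have "card U = card (\<Union>c'. {u \<in> U. u $ j = c'})" by (rule arg_cong[where f = card]) auto
  also have "\<dots> = (\<Sum>c'\<in>UNIV. card {u \<in> U. u $ j = c'})"
    by (rule card_UN_disjoint) (auto intro: finite_subset[OF _ finU])
  also have "\<dots> = (\<Sum>c'\<in>(UNIV :: 'a set). card {u \<in> U. u $ j = c})"
    using card_coord_fibre_le[OF assms] by (intro sum.cong) (auto intro: le_antisym)
  finally show ?thesis by simp
qed

lemma card_coord_neq:
  fixes U :: "'a::{finite,field} vec set"
  assumes U: "U \<subseteq> carrier_vec m" and j: "j < m" and e: "e \<in> carrier_vec m" "e $ j \<noteq> 0"
    and closed: "\<And>u a. u \<in> U \<Longrightarrow> u + a \<cdot>\<^sub>v e \<in> U"
  shows "real (card {u \<in> U. u $ j \<noteq> d}) = (real CARD('a) - 1) / real CARD('a) * real (card U)"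
proof -
  define F where "F = real (card {u \<in> U. u $ j = d})"
  define q where "q = real CARD('a)"
  have finU: "finite U" using U finite_carrier_vec by (rule finite_subset)
  have "{u \<in> U. u $ j \<noteq> d} = U - {u \<in> U. u $ j = d}" by auto
  then have X: "real (card {u \<in> U. u $ j \<noteq> d}) = real (card U) - F"
    unfolding F_def using real_card_Diff_subset[OF finU, of "{u \<in> U. u $ j = d}"] by auto
  have UF: "real (card U) = q * F"
    unfolding q_def F_def using card_coord_fibre[OF assms, of d] of_nat_mult by metis
  have "q > 0" unfolding q_def using one_less_CARD_field[where 'a='a] by simp
  then show ?thesis unfolding X UF q_def[symmetric] by (simp add: field_simps)
qed

lemma card_carrier_vec_coord_neq:
  assumes "j < m"
  shows "real (card {v \<in> carrier_vec m. v $ j \<noteq> (d :: 'a::{finite,field})}) =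
    (real CARD('a) - 1) / real CARD('a) * real CARD('a) ^ m"
  using card_coord_neq[of "carrier_vec m" m j "unit_vec m j" d] assms by (simp add: card_carrier_vec)

definition zero_col :: "'a::zero mat \<Rightarrow> nat \<Rightarrow> bool" where
  "zero_col A j \<longleftrightarrow> (\<forall>i < dim_row A. A $$ (i, j) = 0)"

lemma row_space_coord_zero:
  assumes A: "A \<in> carrier_mat k m" and j: "j < m" and "zero_col A j"
    and u: "u \<in> vec_space.row_space m A"
  shows "u $ j = 0"
proof -
  interpret vec_space "TYPE('a::field)" m .
  obtain y where y: "y \<in> carrier_vec k" "u = A\<^sup>T *\<^sub>v y" using u row_space_eq[OF A] A by auto
  have "col A j = 0\<^sub>v k" using A j assms(3) by (intro eq_vecI) (auto simp: zero_col_def)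
  then show ?thesis using y A j by simp
qed

lemma row_space_add_smult_row:
  assumes A: "A \<in> carrier_mat k m" and i: "i < k" and u: "u \<in> vec_space.row_space m A"
  shows "u + a \<cdot>\<^sub>v row A i \<in> vec_space.row_space m A"
proof -
  interpret vec_space "TYPE('a::field)" m .
  have R: "set (rows A) \<subseteq> carrier_vec m" using A by (auto simp: rows_def)
  have "a \<cdot>\<^sub>v row A i \<in> span (set (rows A))"
    using smult_in_span[OF R] row_mem_row_space[OF A i] by (simp add: row_space_def)
  then have "a \<cdot>\<^sub>v row A i + u \<in> row_space A"
    using span_add1[OF R] u by (simp add: row_space_def)
  moreover have "u \<in> carrier_vec m" using u row_space_carrier[OF A] by blast
  ultimately show ?thesis using A i by (simp add: comm_add_vec[of u m])
qed

lemma card_row_space_coord_neq: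
  fixes A :: "'a::{finite,field} mat"
  assumes A: "A \<in> carrier_mat k m" and j: "j < m"
  shows "real (card {u \<in> vec_space.row_space m A. u $ j \<noteq> d}) =
    (if zero_col A j then (if d = 0 then 0 else real CARD('a) ^ mrank A)
     else (real CARD('a) - 1) / real CARD('a) * real CARD('a) ^ mrank A)"
proof (cases "zero_col A j")
  case True
  then have "{u \<in> vec_space.row_space m A. u $ j \<noteq> d} = (if d = 0 then {} else vec_space.row_space m A)"
    using row_space_coord_zero[OF A j] by auto
  then show ?thesis using True card_row_space[OF A] by simp
next
  case False
  then obtain i where i: "i < k" "A $$ (i, j) \<noteq> 0" using A by (auto simp: zero_col_def)
  then have "row A i \<in> carrier_vec m" "row A i $ j \<noteq> 0" using A j by auto
  then show ?thesis
    using card_coord_neq[OF row_space_carrier[OF A] j _ _ row_space_add_smult_row[OF A i(1)]]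
      False card_row_space[OF A] by simp
qed

lemma card_not_row_space_coord_neq:
  fixes A :: "'a::{finite,field} mat"
  assumes A: "A \<in> carrier_mat k m" and j: "j < m"
  shows "real (card {v \<in> carrier_vec m. v \<notin> vec_space.row_space m A \<and> v $ j \<noteq> d}) =
    (real CARD('a) - 1) / real CARD('a) * real CARD('a) ^ m
    - real (card {u \<in> vec_space.row_space m A. u $ j \<noteq> d})"
proof -
  have "{v \<in> carrier_vec m. v \<notin> vec_space.row_space m A \<and> v $ j \<noteq> d} =
    {v \<in> carrier_vec m. v $ j \<noteq> d} - {u \<in> vec_space.row_space m A. u $ j \<noteq> d}"
    using row_space_carrier[OF A] by auto
  moreover have "{u \<in> vec_space.row_space m A. u $ j \<noteq> d} \<subseteq> {v \<in> carrier_vec m. v $ j \<noteq> d}"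
    using row_space_carrier[OF A] by auto
  ultimately show ?thesis
    using real_card_Diff_subset[of "{v \<in> carrier_vec m. v $ j \<noteq> d}"]
      card_carrier_vec_coord_neq[OF j, of d] by simp
qed

lemma card_not_row_space:
  fixes A :: "'a::{finite,field} mat"
  assumes A: "A \<in> carrier_mat k m"
  shows "real (card {v \<in> carrier_vec m. v \<notin> vec_space.row_space m A}) =
    real CARD('a) ^ m - real CARD('a) ^ mrank A"
proof -
  have "{v \<in> carrier_vec m. v \<notin> vec_space.row_space m A} = carrier_vec m - vec_space.row_space m A"
    by auto
  then show ?thesis
    using real_card_Diff_subset[OF finite_carrier_vec row_space_carrier[OF A]]
      card_row_space[OF A] by (simp add: card_carrier_vec)
qed

lemma card_append_row_mrank:
  fixes A :: "'a::{finite,field} mat"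
  assumes A: "A \<in> carrier_mat k m"
  shows "real (card {v \<in> carrier_vec m. mrank (append_row A v) = r}) =
    (if mrank A = r then real CARD('a) ^ r else 0)
    + (if Suc (mrank A) = r then real CARD('a) ^ m - real CARD('a) ^ mrank A else 0)"
proof -
  have "{v \<in> carrier_vec m. mrank (append_row A v) = r} =
    (if mrank A = r then vec_space.row_space m A
     else if Suc (mrank A) = r then {v \<in> carrier_vec m. v \<notin> vec_space.row_space m A} else {})"
    using mrank_append_row[OF A] row_space_carrier[OF A] by (auto split: if_splits)
  then show ?thesis using card_row_space[OF A] card_not_row_space[OF A] by auto
qed

section \<open>Inserting a zero column\<close>

definition insert_zero_col :: "nat \<Rightarrow> 'a::zero mat \<Rightarrow> 'a mat" where
  "insert_zero_col r B = mat (dim_row B) (Suc (dim_col B))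
    (\<lambda>(i, c). if c < r then B $$ (i, c) else if c = r then 0 else B $$ (i, c - 1))"

definition delete_col :: "nat \<Rightarrow> 'a mat \<Rightarrow> 'a mat" where
  "delete_col r A = mat (dim_row A) (dim_col A - 1) (\<lambda>(i, c). A $$ (i, if c < r then c else Suc c))"

lemma insert_zero_col_carrier: "B \<in> carrier_mat k m \<Longrightarrow> insert_zero_col r B \<in> carrier_mat k (Suc m)"
  by (auto simp: insert_zero_col_def)

lemma delete_col_carrier: "A \<in> carrier_mat k (Suc m) \<Longrightarrow> delete_col r A \<in> carrier_mat k m"
  by (auto simp: delete_col_def)

lemma insert_zero_col_delete_col:
  "A \<in> carrier_mat k (Suc m) \<Longrightarrow> r \<le> m \<Longrightarrow> zero_col A r \<Longrightarrow> insert_zero_col r (delete_col r A) = A"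
  by (intro eq_matI) (auto simp: insert_zero_col_def delete_col_def zero_col_def)

lemma delete_col_insert_zero_col: "B \<in> carrier_mat k m \<Longrightarrow> delete_col r (insert_zero_col r B) = B"
  by (intro eq_matI) (auto simp: insert_zero_col_def delete_col_def)

lemma zero_col_insert_zero_col: "B \<in> carrier_mat k m \<Longrightarrow> r \<le> m \<Longrightarrow> zero_col (insert_zero_col r B) r"
  by (auto simp: insert_zero_col_def zero_col_def)

lemma tau_insert_zero_col: "B \<in> carrier_mat r m \<Longrightarrow> r \<le> m \<Longrightarrow> tau r (insert_zero_col r B) = tau r B"
  unfolding tau_def by (intro sum.cong) (auto simp: insert_zero_col_def)

lemma cols_insert_zero_col:
  assumes B: "B \<in> carrier_mat k m" and r: "r \<le> m"
  shows "cols (insert_zero_col r B) = take r (cols B) @ 0\<^sub>v k # drop r (cols B)"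
proof (rule nth_equalityI)
  show "length (cols (insert_zero_col r B)) = length (take r (cols B) @ 0\<^sub>v k # drop r (cols B))"
    using B r by (simp add: insert_zero_col_def)
next
  fix c assume "c < length (cols (insert_zero_col r B))"
  then have c: "c < Suc m" using B by (simp add: insert_zero_col_def)
  show "cols (insert_zero_col r B) ! c = (take r (cols B) @ 0\<^sub>v k # drop r (cols B)) ! c"
  proof (cases "c < r")
    case True
    then show ?thesis using B r c by (intro eq_vecI) (auto simp: insert_zero_col_def nth_append)
  next
    case False
    then show ?thesis
      using B r c by (intro eq_vecI) (auto simp: insert_zero_col_def nth_append nth_Cons')
  qed
qed

lemma mrank_insert_zero_col:
  fixes B :: "'a::{finite,field} mat"
  assumes B: "B \<in> carrier_mat k m" and r: "r \<le> m"
  shows "mrank (insert_zero_col r B) = mrank B"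
proof -
  interpret finite_vec_space "TYPE('a)" k .
  have C: "set (cols B) \<subseteq> carrier_vec k" using B cols_dim[of B] by simp
  have "set (take r (cols B)) \<union> set (drop r (cols B)) = set (cols B)"
    by (metis append_take_drop_id set_append)
  then have "set (cols (insert_zero_col r B)) = set (0\<^sub>v k # cols B)"
    by (auto simp: cols_insert_zero_col[OF B r])
  then have "col_space (insert_zero_col r B) = span_list (0\<^sub>v k # cols B)"
    using C by (simp add: col_space_def span_list_as_span)
  also have "\<dots> = span_list (cols B)" by (rule span_list_Cons_mem[OF C zero_mem_span_list[OF C]])
  also have "\<dots> = col_space B" using C by (simp add: col_space_def span_list_as_span)
  finally have "CARD('a) ^ mrank (insert_zero_col r B) = CARD('a) ^ mrank B"
    using card_col_space[OF insert_zero_col_carrier[OF B, of r]] card_col_space[OF B] by simp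
  then show ?thesis by (simp only: CARD_power_inject)
qed

lemma card_zero_col:
  fixes P :: "'a::{finite,field} mat \<Rightarrow> bool"
  assumes r: "r \<le> m"
  shows "card {A \<in> carrier_mat k (Suc m). zero_col A r \<and> P A} =
    card {B \<in> carrier_mat k m. P (insert_zero_col r B)}"
proof -
  have "{A \<in> carrier_mat k (Suc m). zero_col A r \<and> P A} =
    insert_zero_col r ` {B \<in> carrier_mat k m. P (insert_zero_col r B)}"
  proof (rule equalityI; rule subsetI)
    fix A assume "A \<in> {A \<in> carrier_mat k (Suc m). zero_col A r \<and> P A}"
    then have A: "A \<in> carrier_mat k (Suc m)" "zero_col A r" "P A" by auto
    then have "delete_col r A \<in> {B \<in> carrier_mat k m. P (insert_zero_col r B)}"
      using r by (simp add: delete_col_carrier insert_zero_col_delete_col)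
    moreover have "A = insert_zero_col r (delete_col r A)"
      using A r by (simp add: insert_zero_col_delete_col)
    ultimately show "A \<in> insert_zero_col r ` {B \<in> carrier_mat k m. P (insert_zero_col r B)}"
      by (rule rev_image_eqI)
  qed (auto simp: insert_zero_col_carrier zero_col_insert_zero_col r)
  moreover have "inj_on (insert_zero_col r) {B \<in> carrier_mat k m. P (insert_zero_col r B)}"
    by (rule inj_on_inverseI[where g = "delete_col r"]) (auto simp: delete_col_insert_zero_col)
  ultimately show ?thesis by (simp add: card_image)
qed

section \<open>Row-by-row recursions\<close>

definition rank_count :: "'a::{finite,field} itself \<Rightarrow> nat \<Rightarrow> nat \<Rightarrow> nat \<Rightarrow> nat" where
  "rank_count _ a b k = card {M \<in> carrier_mat a b :: 'a mat set. mrank M = k}"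

definition trace_rank_count :: "'a::{finite,field} itself \<Rightarrow> nat \<Rightarrow> nat \<Rightarrow> nat \<Rightarrow> nat" where
  "trace_rank_count _ r m s = card {M \<in> carrier_mat r m :: 'a mat set. mrank M = s \<and> tau r M \<noteq> 0}"

lemma rank_count_rank_0: "rank_count TYPE('a::{finite,field}) a b 0 = 1"
proof -
  have "{M \<in> carrier_mat a b :: 'a mat set. mrank M = 0} = {0\<^sub>m a b}"
    using mrank_eq_0_imp_zero by auto
  then show ?thesis by (simp add: rank_count_def)
qed

lemma rank_count_0_rows: "rank_count TYPE('a::{finite,field}) 0 b k = (if k = 0 then 1 else 0)"
proof -
  have "M = 0\<^sub>m 0 b" if "M \<in> carrier_mat 0 b" for M :: "'a mat"
    using that by (intro eq_matI) auto
  then have "carrier_mat 0 b = {0\<^sub>m 0 b :: 'a mat}" by auto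
  then have "{M \<in> carrier_mat 0 b :: 'a mat set. mrank M = k} = (if k = 0 then {0\<^sub>m 0 b} else {})"
    by auto
  then show ?thesis by (simp add: rank_count_def)
qed

lemma trace_rank_count_rank_0:
  assumes "r \<le> m"
  shows "trace_rank_count TYPE('a::{finite,field}) r m 0 = 0"
proof -
  have "tau r M = 0" if "M \<in> carrier_mat r m" "mrank M = 0" for M :: "'a mat"
    using mrank_eq_0_imp_zero[OF that] assms by (simp add: tau_def)
  then have "{M \<in> carrier_mat r m :: 'a mat set. mrank M = 0 \<and> tau r M \<noteq> 0} = {}" by auto
  then show ?thesis by (simp add: trace_rank_count_def)
qed

lemma first_rows_id: "M \<in> carrier_mat r m \<Longrightarrow> first_rows r M = M"
  by (intro eq_matI) (auto simp: first_rows_index)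

lemma wcount_all_rows:
  "wcount TYPE('a::{finite,field}) r s t r m = (if t = s then trace_rank_count TYPE('a) r m s else 0)"
proof -
  have "{M \<in> carrier_mat r m :: 'a mat set. mrank M = t \<and> mrank (first_rows r M) = s \<and> tau r M \<noteq> 0} =
    {M \<in> carrier_mat r m. mrank M = t \<and> mrank M = s \<and> tau r M \<noteq> 0}"
  proof (rule Collect_cong)
    fix M :: "'a mat"
    show "(M \<in> carrier_mat r m \<and> mrank M = t \<and> mrank (first_rows r M) = s \<and> tau r M \<noteq> 0) \<longleftrightarrow>
      (M \<in> carrier_mat r m \<and> mrank M = t \<and> mrank M = s \<and> tau r M \<noteq> 0)"
      using first_rows_id[of M r m] by auto
  qed
  then show ?thesis by (cases "t = s") (simp_all add: wcount_def trace_rank_count_def)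
qed

lemma mrank_first_rows_le:
  fixes M :: "'a::{finite,field} mat"
  assumes M: "M \<in> carrier_mat n m" and r: "r \<le> n"
  shows "mrank (first_rows r M) \<le> mrank M"
proof -
  interpret vec_space "TYPE('a)" m .
  have F: "first_rows r M \<in> carrier_mat r m" using M by (rule first_rows_carrier)
  have "set (rows (first_rows r M)) \<subseteq> set (rows M)"
  proof
    fix w assume "w \<in> set (rows (first_rows r M))"
    then obtain i where i: "i < r" "w = row (first_rows r M) i" by (auto simp: rows_def)
    then have "w = row M i" using M r by (intro eq_vecI) (auto simp: first_rows_index)
    then show "w \<in> set (rows M)" using i r M by (auto simp: rows_def)
  qed
  then have "row_space (first_rows r M) \<subseteq> row_space M"
    unfolding row_space_def by (rule span_is_monotone)
  then have "card (row_space (first_rows r M)) \<le> card (row_space M)"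
    by (rule card_mono[OF finite_subset[OF row_space_carrier[OF M] finite_carrier_vec]])
  then have "CARD('a) ^ mrank (first_rows r M) \<le> CARD('a) ^ mrank M"
    using card_row_space[OF F] card_row_space[OF M] by simp
  then show ?thesis using one_less_CARD_field[where 'a='a] power_le_imp_le_exp by blast
qed

lemma card_mrank_Suc_rows:
  fixes C :: "'a::{finite,field} mat \<Rightarrow> bool"
  shows "real (card {M \<in> carrier_mat (Suc a) b. mrank M = k \<and> C (first_rows a M)}) =
    real (card {A \<in> carrier_mat a b. mrank A = k \<and> C A}) * real CARD('a) ^ k
    + real (card {A \<in> carrier_mat a b. Suc (mrank A) = k \<and> C A})
      * (real CARD('a) ^ b - real CARD('a) ^ (k - 1))"
proof -
  let ?q = "real CARD('a)"
  have per: "real (card {v \<in> carrier_vec b. mrank (append_row A v) = k \<and> C (first_rows a (append_row A v))}) =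
      (if mrank A = k \<and> C A then ?q ^ k else 0)
      + (if Suc (mrank A) = k \<and> C A then ?q ^ b - ?q ^ (k - 1) else 0)"
    if A: "A \<in> carrier_mat a b" for A
  proof -
    have "{v \<in> carrier_vec b. mrank (append_row A v) = k \<and> C (first_rows a (append_row A v))} =
      (if C A then {v \<in> carrier_vec b. mrank (append_row A v) = k} else {})"
      using first_rows_append_row[OF A] by auto
    moreover have "?q ^ mrank A = ?q ^ (k - 1)" if "Suc (mrank A) = k" using that by auto
    ultimately show ?thesis using card_append_row_mrank[OF A, of k] by auto
  qed
  have "real (card {M \<in> carrier_mat (Suc a) b. mrank M = k \<and> C (first_rows a M)}) =
      (\<Sum>A\<in>carrier_mat a b. real (card {v \<in> carrier_vec b.
         mrank (append_row A v) = k \<and> C (first_rows a (append_row A v))}))"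
    by (simp add: card_append_row_sum)
  also have "\<dots> = (\<Sum>A\<in>carrier_mat a b. (if mrank A = k \<and> C A then ?q ^ k else 0)
      + (if Suc (mrank A) = k \<and> C A then ?q ^ b - ?q ^ (k - 1) else 0))"
    using per by (intro sum.cong) auto
  finally show ?thesis by (simp add: sum.distrib sum.inter_filter[symmetric])
qed

lemma rank_count_Suc_rows:
  "real (rank_count TYPE('a::{finite,field}) (Suc a) b (Suc k)) =
    real CARD('a) ^ Suc k * real (rank_count TYPE('a) a b (Suc k))
    + (real CARD('a) ^ b - real CARD('a) ^ k) * real (rank_count TYPE('a) a b k)"
  using card_mrank_Suc_rows[where 'a='a and C = "\<lambda>_. True" and a = a and b = b and k = "Suc k"]
  by (simp add: rank_count_def)

lemma wcount_Suc_rows: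
  assumes "r \<le> l" "l \<le> m"
  shows "real (wcount TYPE('a::{finite,field}) r s t (Suc l) m) =
    real (wcount TYPE('a) r s t l m) * real CARD('a) ^ t
    + real (card {A \<in> carrier_mat l m :: 'a mat set.
        Suc (mrank A) = t \<and> mrank (first_rows r A) = s \<and> tau r A \<noteq> 0})
      * (real CARD('a) ^ m - real CARD('a) ^ (t - 1))"
proof -
  define C where "C A \<longleftrightarrow> mrank (first_rows r A) = s \<and> tau r A \<noteq> 0" for A :: "'a mat"
  have "C (first_rows l M) \<longleftrightarrow> mrank (first_rows r M) = s \<and> tau r M \<noteq> 0"
    if "M \<in> carrier_mat (Suc l) m" for M
    using that assms by (simp add: C_def first_rows_first_rows tau_first_rows)
  then have "{M \<in> carrier_mat (Suc l) m. mrank M = t \<and> mrank (first_rows r M) = s \<and> tau r M \<noteq> 0}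
      = {M \<in> carrier_mat (Suc l) m. mrank M = t \<and> C (first_rows l M)}"
    by auto
  then have "real (wcount TYPE('a) r s t (Suc l) m) =
      real (card {M \<in> carrier_mat (Suc l) m. mrank M = t \<and> C (first_rows l M)})"
    by (simp add: wcount_def)
  also have "\<dots> = real (card {A \<in> carrier_mat l m. mrank A = t \<and> C A}) * real CARD('a) ^ t
    + real (card {A \<in> carrier_mat l m. Suc (mrank A) = t \<and> C A})
      * (real CARD('a) ^ m - real CARD('a) ^ (t - 1))"
    by (rule card_mrank_Suc_rows)
  finally show ?thesis by (simp add: wcount_def C_def)
qed

lemma wcount_Suc_rows_same_rank:
  assumes rl: "r \<le> l" and lm: "l \<le> m"
  shows "real (wcount TYPE('a::{finite,field}) r s s (Suc l) m) =
    real (wcount TYPE('a) r s s l m) * real CARD('a) ^ s"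
proof -
  have "mrank (first_rows r A) \<le> mrank A" if "A \<in> carrier_mat l m" for A :: "'a mat"
    using mrank_first_rows_le[OF that rl] .
  then have empty: "{A \<in> carrier_mat l m :: 'a mat set.
      Suc (mrank A) = s \<and> mrank (first_rows r A) = s \<and> tau r A \<noteq> 0} = {}"
    by force
  show ?thesis using wcount_Suc_rows[where 'a = 'a, OF rl lm, of s s, unfolded empty] by simp
qed

lemma wcount_Suc_rows_Suc:
  assumes "r \<le> l" "l \<le> m"
  shows "real (wcount TYPE('a::{finite,field}) r s (Suc t) (Suc l) m) =
    real (wcount TYPE('a) r s (Suc t) l m) * real CARD('a) ^ Suc t
    + real (wcount TYPE('a) r s t l m) * (real CARD('a) ^ m - real CARD('a) ^ t)"
  using wcount_Suc_rows[where 'a = 'a, OF assms, of s "Suc t"] by (simp add: wcount_def)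

lemma card_zero_col_mrank:
  assumes "r \<le> m"
  shows "card {A \<in> carrier_mat k (Suc m) :: 'a::{finite,field} mat set. zero_col A r \<and> mrank A = s} =
    rank_count TYPE('a) k m s"
proof -
  have "{B \<in> carrier_mat k m :: 'a mat set. mrank (insert_zero_col r B) = s} =
      {B \<in> carrier_mat k m. mrank B = s}"
    using mrank_insert_zero_col[OF _ assms] by auto
  then show ?thesis unfolding rank_count_def card_zero_col[OF assms] by simp
qed

lemma card_zero_col_mrank_trace:
  assumes "r \<le> m"
  shows "card {A \<in> carrier_mat r (Suc m) :: 'a::{finite,field} mat set.
      zero_col A r \<and> (mrank A = s \<and> tau r A \<noteq> 0)} = trace_rank_count TYPE('a) r m s"
proof -
  have "{B \<in> carrier_mat r m :: 'a mat set. mrank (insert_zero_col r B) = s \<and> tau r (insert_zero_col r B) \<noteq> 0} =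
      {B \<in> carrier_mat r m. mrank B = s \<and> tau r B \<noteq> 0}"
    by (auto simp: mrank_insert_zero_col[OF _ assms] tau_insert_zero_col[OF _ assms])
  then show ?thesis unfolding trace_rank_count_def card_zero_col[OF assms] by simp
qed

lemma card_append_row_mrank_trace:
  fixes A :: "'a::{finite,field} mat"
  assumes A: "A \<in> carrier_mat r (Suc m)" and r: "r \<le> m"
  defines "h \<equiv> real (card {u \<in> vec_space.row_space (Suc m) A. u $ r \<noteq> - tau r A})"
  shows "real (card {v \<in> carrier_vec (Suc m). mrank (append_row A v) = k \<and> tau (Suc r) (append_row A v) \<noteq> 0}) =
    (if mrank A = k then h else 0)
    + (if Suc (mrank A) = k
       then (real CARD('a) - 1) / real CARD('a) * real CARD('a) ^ Suc m - h else 0)"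
proof -
  have tau: "tau (Suc r) (append_row A v) \<noteq> 0 \<longleftrightarrow> v $ r \<noteq> - tau r A" for v
    using tau_Suc_append_row[OF A, of v] r by (auto simp: add_eq_0_iff)
  have "{v \<in> carrier_vec (Suc m). mrank (append_row A v) = k \<and> tau (Suc r) (append_row A v) \<noteq> 0} =
    (if mrank A = k then {u \<in> vec_space.row_space (Suc m) A. u $ r \<noteq> - tau r A}
     else if Suc (mrank A) = k
     then {v \<in> carrier_vec (Suc m). v \<notin> vec_space.row_space (Suc m) A \<and> v $ r \<noteq> - tau r A}
     else {})"
    using mrank_append_row[OF A] row_space_carrier[OF A] unfolding tau by (auto split: if_splits)
  then show ?thesis
    using card_not_row_space_coord_neq[OF A, of r "- tau r A"] r unfolding h_def by auto
qed

text \<open>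
  If column \<open>r\<close> of \<open>A\<close> vanishes, so does coordinate \<open>r\<close> on its row space, and \<open>A\<close> comes
  from an \<open>r \<times> m\<close> matrix; otherwise coordinate \<open>r\<close> is equidistributed on the row space.
\<close>

lemma sum_card_row_space_coord_neq_trace:
  assumes r: "r \<le> m"
  shows "(\<Sum>A\<in>{A \<in> carrier_mat r (Suc m) :: 'a::{finite,field} mat set. mrank A = k}.
      real (card {u \<in> vec_space.row_space (Suc m) A. u $ r \<noteq> - tau r A})) =
    real CARD('a) ^ k * real (trace_rank_count TYPE('a) r m k)
    + (real CARD('a) - 1) / real CARD('a) * real CARD('a) ^ k
      * (real (rank_count TYPE('a) r (Suc m) k) - real (rank_count TYPE('a) r m k))"
proof -
  let ?q = "real CARD('a)"
  let ?S = "{A \<in> carrier_mat r (Suc m) :: 'a mat set. mrank A = k}"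
  have "real (card {u \<in> vec_space.row_space (Suc m) A. u $ r \<noteq> - tau r A}) =
      (if zero_col A r \<and> tau r A \<noteq> 0 then ?q ^ k else 0)
      + (if \<not> zero_col A r then (?q - 1) / ?q * ?q ^ k else 0)" if "A \<in> ?S" for A
    using card_row_space_coord_neq[of A r "Suc m" r "- tau r A"] that r by auto
  then have "(\<Sum>A\<in>?S. real (card {u \<in> vec_space.row_space (Suc m) A. u $ r \<noteq> - tau r A})) =
      (\<Sum>A\<in>?S. (if zero_col A r \<and> tau r A \<noteq> 0 then ?q ^ k else 0)
        + (if \<not> zero_col A r then (?q - 1) / ?q * ?q ^ k else 0))"
    by (rule sum.cong[OF refl])
  also have "\<dots> = real (card {A \<in> ?S. zero_col A r \<and> tau r A \<noteq> 0}) * ?q ^ k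
      + real (card {A \<in> ?S. \<not> zero_col A r}) * ((?q - 1) / ?q * ?q ^ k)"
    by (simp add: sum.distrib sum.inter_filter[symmetric])
  also have "{A \<in> ?S. zero_col A r \<and> tau r A \<noteq> 0} =
      {A \<in> carrier_mat r (Suc m). zero_col A r \<and> (mrank A = k \<and> tau r A \<noteq> 0)}"
    by auto
  also have "card \<dots> = trace_rank_count TYPE('a) r m k" by (rule card_zero_col_mrank_trace[OF r])
  also have "{A \<in> ?S. \<not> zero_col A r} =
      ?S - {A \<in> carrier_mat r (Suc m). zero_col A r \<and> mrank A = k}"
    by auto
  also have "real (card \<dots>) =
      real (card ?S) - real (card {A \<in> carrier_mat r (Suc m) :: 'a mat set. zero_col A r \<and> mrank A = k})"
    by (rule real_card_Diff_subset) auto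
  also have "\<dots> = real (rank_count TYPE('a) r (Suc m) k) - real (rank_count TYPE('a) r m k)"
    by (simp add: rank_count_def card_zero_col_mrank[OF r])
  finally show ?thesis by (simp add: algebra_simps)
qed

lemma trace_rank_count_Suc:
  assumes r: "r \<le> m"
  defines "q \<equiv> real CARD('a::{finite,field})"
  defines "H k \<equiv> q ^ k * real (trace_rank_count TYPE('a) r m k)
    + (q - 1) / q * q ^ k * (real (rank_count TYPE('a) r (Suc m) k) - real (rank_count TYPE('a) r m k))"
  shows "real (trace_rank_count TYPE('a) (Suc r) (Suc m) (Suc s)) =
    H (Suc s) + (q - 1) / q * q ^ Suc m * real (rank_count TYPE('a) r (Suc m) s) - H s"
proof -
  let ?h = "\<lambda>A :: 'a mat. real (card {u \<in> vec_space.row_space (Suc m) A. u $ r \<noteq> - tau r A})"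
  let ?c = "(q - 1) / q * q ^ Suc m"
  have "real (trace_rank_count TYPE('a) (Suc r) (Suc m) (Suc s)) =
      (\<Sum>A\<in>(carrier_mat r (Suc m) :: 'a mat set). real (card {v \<in> carrier_vec (Suc m).
        mrank (append_row A v) = Suc s \<and> tau (Suc r) (append_row A v) \<noteq> 0}))"
    by (simp add: trace_rank_count_def card_append_row_sum)
  also have "\<dots> = (\<Sum>A\<in>(carrier_mat r (Suc m) :: 'a mat set).
      (if mrank A = Suc s then ?h A else 0) + (if mrank A = s then ?c - ?h A else 0))"
    by (intro sum.cong) (auto simp: q_def card_append_row_mrank_trace[OF _ r])
  also have "\<dots> = (\<Sum>A\<in>{A \<in> carrier_mat r (Suc m) :: 'a mat set. mrank A = Suc s}. ?h A)
      + (\<Sum>A\<in>{A \<in> carrier_mat r (Suc m) :: 'a mat set. mrank A = s}. ?c - ?h A)"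
    by (simp add: sum.distrib sum.inter_filter[symmetric])
  also have "\<dots> = H (Suc s) + ?c * real (rank_count TYPE('a) r (Suc m) s) - H s"
    by (simp add: sum_subtractf sum_card_row_space_coord_neq_trace[OF r] H_def q_def rank_count_def)
  finally show ?thesis .
qed

section \<open>Closed forms\<close>

lemma gfact_0 [simp]: "gfact q 0 = 1"
  by (simp add: gfact_def)

lemma gfact_Suc: "gfact q (Suc n) = gfact q n * (q ^ Suc n - 1)"
  by (simp add: gfact_def atLeastAtMostSuc_conv mult.commute)

lemma gfact_pos: "1 < q \<Longrightarrow> 0 < gfact q n"
proof (induction n)
  case (Suc n)
  then have "1 < q ^ Suc n" by (intro one_less_power) auto
  with Suc show ?case by (simp add: gfact_Suc)
qed simp

lemma gbinom_0_right [simp]: "1 < q \<Longrightarrow> gbinom q n 0 = 1"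
  using gfact_pos[of q n] by (simp add: gbinom_def)

lemma gbinom_self [simp]: "1 < q \<Longrightarrow> gbinom q n n = 1"
  using gfact_pos[of q n] by (simp add: gbinom_def)

lemma gbinom_eq_0: "n < k \<Longrightarrow> gbinom q n k = 0"
  by (simp add: gbinom_def)

lemma gbinom_Suc_Suc:
  assumes q: "1 < q"
  shows "gbinom q (Suc n) (Suc k) = gbinom q n k + q ^ Suc k * gbinom q n (Suc k)"
proof (cases "k < n")
  case False
  then show ?thesis using q by (cases "k = n") (simp_all add: gbinom_eq_0)
next
  case True
  then obtain d where n: "n = k + Suc d" by (metis add_Suc_right less_imp_Suc_add)
  have pos: "0 < q ^ Suc i - 1" for i
    using one_less_power[OF q, of "Suc i"] by simp
  have split: "q ^ Suc n - 1 = (q ^ Suc k - 1) + q ^ Suc k * (q ^ Suc d - 1)"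
    using n by (simp add: algebra_simps power_add)
  have "G * c / (Gk * a * (Gd * b)) = G / (Gk * (Gd * b)) + Q * (G / (Gk * a * Gd))"
    if "Gk > 0" "Gd > 0" "a > 0" "b > 0" "c = a + Q * b" for G Gk Gd a b c Q :: real
    using that by (simp add: field_simps)
  from this[OF gfact_pos[OF q, of k] gfact_pos[OF q, of d] pos[of k] pos[of d] split]
  show ?thesis using n by (simp add: gbinom_def gfact_Suc)
qed

lemma Suc_choose_two: "Suc j choose 2 = (j choose 2) + j"
  by (simp add: numeral_2_eq_2)

text \<open>The coefficient of \<open>x ^ s\<close> in \<open>\<Prod>i<r. 1 - q ^ i * x\<close>.\<close>
definition alt_gbinom :: "real \<Rightarrow> nat \<Rightarrow> nat \<Rightarrow> real" where
  "alt_gbinom q r s = (-1) ^ s * q ^ (s choose 2) * gbinom q r s"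

lemma alt_gbinom_Suc_Suc:
  "1 < q \<Longrightarrow> alt_gbinom q (Suc r) (Suc j) = q ^ Suc j * alt_gbinom q r (Suc j) - q ^ j * alt_gbinom q r j"
  by (simp add: alt_gbinom_def gbinom_Suc_Suc Suc_choose_two power_add algebra_simps)

lemma gbinom_rank_formula_step:
  assumes q: "1 < q" and jb: "Suc j \<le> b"
  shows "q ^ Suc j * (q ^ (Suc j choose 2) * gbinom q a (Suc j) * gfact q b / gfact q (b - Suc j))
    + (q ^ b - q ^ j) * (q ^ (j choose 2) * gbinom q a j * gfact q b / gfact q (b - j))
    = q ^ (Suc j choose 2) * gbinom q (Suc a) (Suc j) * gfact q b / gfact q (b - Suc j)"
proof -
  obtain e where b: "b = j + Suc e" using jb by (metis add_Suc_right le_add_diff_inverse2 Suc_le_D add.commute)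
  have be: "b - Suc j = e" "b - j = Suc e" using b by auto
  have pw: "q ^ b = q ^ j * q ^ Suc e" using b by (simp add: power_add)
  have pos: "0 < q ^ Suc e - 1" using one_less_power[OF q, of "Suc e"] by simp
  have "q * P * (Y * P * u * G / E) + (P * X - P) * (Y * w * G / (E * (X - 1)))
      = Y * P * (w + q * P * u) * G / E"
    if "E > 0" "X - 1 > 0" for P X Y u w G E :: real
    using that by (simp add: field_simps)
  from this[OF gfact_pos[OF q, of e] pos, where P = "q ^ j" and Y = "q ^ (j choose 2)"
      and u = "gbinom q a (Suc j)" and w = "gbinom q a j" and G = "gfact q b"]
  show ?thesis unfolding be pw gfact_Suc[of q e] gbinom_Suc_Suc[OF q] Suc_choose_two power_add
    by (simp add: algebra_simps)
qed

lemma rank_count_eq: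
  defines "q \<equiv> real CARD('a::{finite,field})"
  shows "real (rank_count TYPE('a) a b k) =
    (if k \<le> b then q ^ (k choose 2) * gbinom q a k * gfact q b / gfact q (b - k) else 0)"
proof (induction a arbitrary: k)
  case 0
  have "1 < q" unfolding q_def using one_less_CARD_field[where 'a='a] by simp
  then show ?case
    by (cases k) (simp_all add: rank_count_0_rows gbinom_def binomial_eq_0 gfact_pos[THEN less_imp_neq, symmetric])
next
  case (Suc a)
  have q: "1 < q" unfolding q_def using one_less_CARD_field[where 'a='a] by simp
  show ?case
  proof (cases k)
    case 0
    then show ?thesis using q gfact_pos[OF q, of b] by (simp add: rank_count_rank_0 numeral_2_eq_2)
  next
    case (Suc j)
    have rec: "real (rank_count TYPE('a) (Suc a) b (Suc j)) =
        q ^ Suc j * real (rank_count TYPE('a) a b (Suc j)) + (q ^ b - q ^ j) * real (rank_count TYPE('a) a b j)"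
      unfolding q_def by (rule rank_count_Suc_rows)
    show ?thesis
    proof (cases "Suc j \<le> b")
      case True
      then show ?thesis using rec Suc.IH[of "Suc j"] Suc.IH[of j] gbinom_rank_formula_step[OF q True] Suc
        by simp
    next
      case False
      then have "real (rank_count TYPE('a) a b (Suc j)) = 0"
        and "j \<noteq> b \<Longrightarrow> real (rank_count TYPE('a) a b j) = 0"
        using Suc.IH[of "Suc j"] Suc.IH[of j] by auto
      then show ?thesis using rec False Suc by (cases "j = b") auto
    qed
  qed
qed

lemma trace_rank_count_eq:
  defines "q \<equiv> real CARD('a::{finite,field})"
  shows "r \<le> m \<Longrightarrow> real (trace_rank_count TYPE('a) r m s) =
    (q - 1) / q * (real (rank_count TYPE('a) r m s) - alt_gbinom q r s)"
proof (induction r arbitrary: m s)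
  case 0
  have "1 < q" unfolding q_def using one_less_CARD_field[where 'a='a] by simp
  moreover have "trace_rank_count TYPE('a) 0 m s = 0" by (simp add: trace_rank_count_def tau_def)
  ultimately show ?case
    by (cases s) (simp_all add: rank_count_0_rows alt_gbinom_def gbinom_def numeral_2_eq_2)
next
  case (Suc r)
  have q: "1 < q" unfolding q_def using one_less_CARD_field[where 'a='a] by simp
  obtain m' where m: "m = Suc m'" and r: "r \<le> m'" using Suc.prems by (cases m) auto
  show ?case
  proof (cases s)
    case 0
    then show ?thesis using Suc.prems q
      by (simp add: trace_rank_count_rank_0 rank_count_rank_0 alt_gbinom_def numeral_2_eq_2)
  next
    case (Suc j)
    have "F1 = c * (NN - DD)"
      if "F1 = Q * Fa + c * Q * (N1 - N0) + c * W * M1 - (P * Fb + c * P * (M1 - M0))"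
        "Fa = c * (N0 - Da)" "Fb = c * (M0 - Db)" "NN = Q * N1 + (W - P) * M1" "DD = Q * Da - P * Db"
      for F1 Fa Fb NN DD Q c W P N1 N0 M1 M0 Da Db :: real
      unfolding that by (simp add: algebra_simps)
    from this[OF trace_rank_count_Suc[where 'a = 'a, OF r, of j, folded q_def]
        Suc.IH[OF r] Suc.IH[OF r] rank_count_Suc_rows[where 'a = 'a, folded q_def]
        alt_gbinom_Suc_Suc[OF q]]
    show ?thesis unfolding m Suc by (simp add: mult.assoc)
  qed
qed

lemma wcount_eq:
  defines "q \<equiv> real CARD('a::{finite,field})"
  assumes "s \<le> m"
  shows "s \<le> t \<Longrightarrow> r + d \<le> m \<Longrightarrow> real (wcount TYPE('a) r s t (r + d) m) =
    real (trace_rank_count TYPE('a) r m s) * q ^ (s * d) * real (rank_count TYPE('a) d (m - s) (t - s))"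
proof (induction d arbitrary: t)
  case 0
  then show ?case by (simp add: wcount_all_rows rank_count_0_rows)
next
  case (Suc d)
  have rd: "r \<le> r + d" "r + d \<le> m" using Suc.prems by auto
  let ?F = "real (trace_rank_count TYPE('a) r m s)"
  let ?N = "\<lambda>k. real (rank_count TYPE('a) d (m - s) k)"
  show ?case
  proof (cases "t = s")
    case True
    then show ?thesis
      using wcount_Suc_rows_same_rank[where 'a = 'a, OF rd, folded q_def] Suc.IH[of s] Suc.prems(2)
      by (simp add: rank_count_rank_0 power_add algebra_simps)
  next
    case False
    then obtain t' where t: "t = Suc t'" and st: "s \<le> t'" using Suc.prems(1) by (cases t) auto
    have "real (wcount TYPE('a) r s (Suc t') (Suc (r + d)) m) =
        ?F * q ^ (s * d) * ?N (Suc (t' - s)) * q ^ Suc t' + ?F * q ^ (s * d) * ?N (t' - s) * (q ^ m - q ^ t')"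
      using wcount_Suc_rows_Suc[where 'a = 'a, OF rd, folded q_def] Suc.IH[of "Suc t'"] Suc.IH[of t']
        st Suc.prems(2) by (simp add: Suc_diff_le)
    also have "\<dots> = ?F * q ^ (s * Suc d) * (q ^ Suc (t' - s) * ?N (Suc (t' - s))
        + (q ^ (m - s) - q ^ (t' - s)) * ?N (t' - s))"
    proof -
      have "q ^ Suc t' = q ^ s * q ^ Suc (t' - s)" "q ^ t' = q ^ s * q ^ (t' - s)"
        "q ^ m = q ^ s * q ^ (m - s)" "q ^ (s * Suc d) = q ^ s * q ^ (s * d)"
        using st assms(2) by (simp_all flip: power_add)
      then show ?thesis by (simp only:) (simp add: algebra_simps)
    qed
    also have "\<dots> = ?F * q ^ (s * Suc d) * real (rank_count TYPE('a) (Suc d) (m - s) (t - s))"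
      unfolding q_def using t st by (simp add: rank_count_Suc_rows Suc_diff_le)
    finally show ?thesis using t by simp
  qed
qed

theorem mainTheorem16:
  fixes r s t l m :: nat
  assumes "1 \<le> t" "t \<le> l" "l \<le> m" "1 \<le> r" "r \<le> l" "1 \<le> s" "s \<le> t"
  defines "q \<equiv> real (card (UNIV :: 'a::{finite,field} set))"
  shows "real (wcount TYPE('a) r s t l m) =
    (q - 1) / q * q ^ (s choose 2) *
    (gfact q m / gfact q (m - t) - (-1) ^ s * gfact q (m - s) / gfact q (m - t)) *
    q ^ (s * (l - r)) * q ^ ((t - s) choose 2) * gbinom q r s * gbinom q (l - r) (t - s)"
proof -
  have q: "1 < q" unfolding q_def using one_less_CARD_field[where 'a = 'a] by simp
  have "real (wcount TYPE('a) r s t (r + (l - r)) m) = real (trace_rank_count TYPE('a) r m s)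
      * q ^ (s * (l - r)) * real (rank_count TYPE('a) (l - r) (m - s) (t - s))"
    unfolding q_def using assms by (intro wcount_eq) auto
  then have W: "real (wcount TYPE('a) r s t l m) = real (trace_rank_count TYPE('a) r m s)
      * q ^ (s * (l - r)) * real (rank_count TYPE('a) (l - r) (m - s) (t - s))"
    using assms by simp
  have F: "real (trace_rank_count TYPE('a) r m s) = (q - 1) / q *
      (q ^ (s choose 2) * gbinom q r s * gfact q m / gfact q (m - s) - alt_gbinom q r s)"
    unfolding q_def using assms by (simp add: trace_rank_count_eq rank_count_eq)
  have N: "real (rank_count TYPE('a) (l - r) (m - s) (t - s)) =
      q ^ ((t - s) choose 2) * gbinom q (l - r) (t - s) * gfact q (m - s) / gfact q (m - t)"
    unfolding q_def using assms by (simp add: rank_count_eq)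
  show ?thesis
    unfolding W F N alt_gbinom_def using q gfact_pos[OF q, of "m - s"] gfact_pos[OF q, of "m - t"]
    by (simp add: field_simps)
qed

end
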